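(* Let $\{q_k:k\ge0\}$ be a non-decreasing sequence of nonnegative numbers with $q_0>0$. There is a constant $c>0$ such that for all $N\in\mathbb N$, all $n\ge M_N$, all $0\le k\le N-1$, $k+1\le l\le N$ and all $x\in I_N^{k,l}$, $$\int_{I_N}\left|\frac1{Q_n}\sum_{j=M_N}^{n}q_{n-j}D_j(x-t)\right|d\mu(t)\le\frac{cM_lM_k}{M_N^2}.$$
   Context: Let $m=(m_0,m_1,\dots)$ be a bounded sequence of integers $m_k\ge 2$; $G_m=\prod_k Z_{m_k}$ (compact abelian group under coordinatewise addition mod $m_k$) with Haar probability measure $\mu$; $M_0=1$, $M_{k+1}=m_kM_k$, $n=\sum_j n_jM_j$ with $n_j\in Z_{m_j}$. $I_N=\{x: x_0=\dots=x_{N-1}=0\}$. For $0\le k<l<N$, $I_N^{k,l}$ is the set of $x\in G_m$ with $x_0=\dots=x_{k-1}=0$, $x_k\ne0$, $x_{k+1}=\dots=x_{l-1}=0$, $x_l\ne0$ (other coordinates arbitrary); for $0\le k<N$, $I_N^{k,N}$ is the set of $x$ with $x_0=\dots=x_{k-1}=0$, $x_k\ne 0$, $x_{k+1}=\dots=x_{N-1}=0$. $r_k(x)=\exp(2\pi i x_k/m_k)$, $\psi_n=\prod_k r_k^{n_k}$, $D_n=\sum_{k=0}^{n-1}\psi_k$, $Q_n=\sum_{k=0}^{n-1}q_k$. *)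

theory Defs
  imports "HOL-Probability.Probability"
begin

text \<open>Vilenkin group G_m: functions x :: nat => nat with x k < m k for all k;
  Haar probability measure = infinite product of uniform measures on Z_{m_k}.\<close>

definition vil_measure :: "(nat \<Rightarrow> nat) \<Rightarrow> (nat \<Rightarrow> nat) measure" where
  "vil_measure m = PiM UNIV (\<lambda>k. uniform_count_measure {..<m k})"

definition vil_G :: "(nat \<Rightarrow> nat) \<Rightarrow> (nat \<Rightarrow> nat) set" where
  "vil_G m = {x. \<forall>k. x k < m k}"

definition vil_M :: "(nat \<Rightarrow> nat) \<Rightarrow> nat \<Rightarrow> nat" where
  "vil_M m k = (\<Prod>i<k. m i)"

definition vil_digit :: "(nat \<Rightarrow> nat) \<Rightarrow> nat \<Rightarrow> nat \<Rightarrow> nat" where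
  "vil_digit m n k = (n div vil_M m k) mod m k"

definition vil_sub :: "(nat \<Rightarrow> nat) \<Rightarrow> (nat \<Rightarrow> nat) \<Rightarrow> (nat \<Rightarrow> nat) \<Rightarrow> (nat \<Rightarrow> nat)" where
  "vil_sub m x t = (\<lambda>k. nat ((int (x k) - int (t k)) mod int (m k)))"

definition vil_r :: "(nat \<Rightarrow> nat) \<Rightarrow> nat \<Rightarrow> (nat \<Rightarrow> nat) \<Rightarrow> complex" where
  "vil_r m k x = cis (2 * pi * real (x k) / real (m k))"

text \<open>psi_n = prod_k r_k^{n_k}; only finitely many digits are nonzero\<close>
definition vil_psi :: "(nat \<Rightarrow> nat) \<Rightarrow> nat \<Rightarrow> (nat \<Rightarrow> nat) \<Rightarrow> complex" where
  "vil_psi m n x = (\<Prod>k\<in>{k. vil_digit m n k \<noteq> 0}. vil_r m k x ^ vil_digit m n k)"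

definition vil_D :: "(nat \<Rightarrow> nat) \<Rightarrow> nat \<Rightarrow> (nat \<Rightarrow> nat) \<Rightarrow> complex" where
  "vil_D m n x = (\<Sum>k<n. vil_psi m k x)"

definition vil_I :: "(nat \<Rightarrow> nat) \<Rightarrow> nat \<Rightarrow> (nat \<Rightarrow> nat) set" where
  "vil_I m N = {x \<in> vil_G m. \<forall>i<N. x i = 0}"

definition vil_Ikl :: "(nat \<Rightarrow> nat) \<Rightarrow> nat \<Rightarrow> nat \<Rightarrow> nat \<Rightarrow> (nat \<Rightarrow> nat) set" where
  "vil_Ikl m N k l =
    (if l < N then
       {x \<in> vil_G m. (\<forall>i<k. x i = 0) \<and> x k \<noteq> 0 \<and> (\<forall>i. k < i \<and> i < l \<longrightarrow> x i = 0) \<and> x l \<noteq> 0}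
     else
       {x \<in> vil_G m. (\<forall>i<k. x i = 0) \<and> x k \<noteq> 0 \<and> (\<forall>i. k < i \<and> i < N \<longrightarrow> x i = 0)})"

end

theory Submission
  imports Defs
begin

text \<open>Write y = x - t. For t \<in> I_N the first N digits of y are those of x, so y_k \<noteq> 0, and
  then the Dirichlet kernel vanishes at y at every index M_p with p > k; consequently
  D_(a M_p + r)(y) = \<psi>_(a M_p)(y) D_r(y) for r \<le> M_p. For p = N this turns every block sum
  \<Sum>_(j = s M_N..i) D_j(y) into a partial sum F_R(y) = \<Sum>_(j < R) D_j(y) with R \<le> M_N, and the
  same periodicity at the digits k and l bounds these by (m_l + 1) M_l M_(k+1). Abel summation
  on each block against the non-increasing weights q_(n-j), together with
  M_N \<Sum>_s q_(n - s M_N) \<le> Q_n, bounds the integrand by c M_l M_k / M_N, and I_N has measure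
  1 / M_N.\<close>

lemma set_integral_le_measure_mult:
  fixes f :: "'a \<Rightarrow> real"
  assumes A: "A \<in> sets M" "emeasure M A \<noteq> \<infinity>" and b: "0 \<le> b"
    and le: "\<And>x. x \<in> A \<Longrightarrow> f x \<le> b"
  shows "(LINT x:A|M. f x) \<le> measure M A * b"
proof (cases "set_integrable M A f")
  case True
  have "set_integrable M A (\<lambda>_. b)"
    using A unfolding set_integrable_def by (intro integrable_indicator) (auto simp: less_top)
  then have "(LINT x:A|M. f x) \<le> (LINT x:A|M. b)"
    using True le by (intro set_integral_mono)
  also have "\<dots> = measure M A * b"
    using set_integral_const[OF A, of b] by simp
  finally show ?thesis .
next
  case False
  then have "(LINT x:A|M. f x) = 0"
    unfolding set_integrable_def set_lebesgue_integral_def by (rule not_integrable_integral_eq)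
  then show ?thesis using b by simp
qed

lemma sum_lessThan_quasi_periodic:
  fixes f :: "nat \<Rightarrow> 'a::comm_semiring_1"
  assumes f: "\<And>a r. r < M \<Longrightarrow> f (a * M + r) = g a * f r" and r: "r \<le> M"
  shows "(\<Sum>j<a * M + r. f j) = (\<Sum>b<a. g b) * (\<Sum>j<M. f j) + g a * (\<Sum>j<r. f j)"
proof -
  have shift: "(\<Sum>j<s. f (b * M + j)) = g b * (\<Sum>j<s. f j)" if "s \<le> M" for b s
    using that by (simp add: sum_distrib_left f)
  have "(\<Sum>j<a * M + r. f j) = (\<Sum>j<a * M. f j) + (\<Sum>j<r. f (a * M + j))"
    by (induction r) (simp_all add: add.assoc)
  also have "(\<Sum>j<a * M. f j) = (\<Sum>b<a. \<Sum>j<M. f (b * M + j))"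
    by (simp add: sum.nat_group[symmetric] sum.shift_bounds_nat_ivl[where m = 0, simplified]
        atLeast0LessThan add.commute)
  finally show ?thesis
    using r by (simp add: shift sum_distrib_right)
qed

section \<open>Summation by parts over blocks\<close>

lemma sum_by_parts_atLeastAtMost:
  fixes w :: "nat \<Rightarrow> real" and d :: "nat \<Rightarrow> 'a::real_vector"
  assumes "a \<le> b"
  shows "(\<Sum>j=a..b. w j *\<^sub>R d j) =
    w b *\<^sub>R (\<Sum>j=a..b. d j) + (\<Sum>i=a..<b. (w i - w (Suc i)) *\<^sub>R (\<Sum>j=a..i. d j))"
  using assms
proof (induction b rule: dec_induct)
  case (step b)
  then show ?case
    by (simp add: algebra_simps)
qed simp

lemma norm_sum_by_parts_le:
  fixes w :: "nat \<Rightarrow> real" and d :: "nat \<Rightarrow> 'a::real_normed_vector"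
  assumes ab: "a \<le> b"
    and partial: "\<And>i. a \<le> i \<Longrightarrow> i \<le> b \<Longrightarrow> norm (\<Sum>j=a..i. d j) \<le> K"
    and decr: "\<And>i. a \<le> i \<Longrightarrow> i < b \<Longrightarrow> w (Suc i) \<le> w i" and nonneg: "0 \<le> w b"
  shows "norm (\<Sum>j=a..b. w j *\<^sub>R d j) \<le> K * w a"
proof -
  have "norm (\<Sum>j=a..b. w j *\<^sub>R d j)
      \<le> w b * norm (\<Sum>j=a..b. d j) + (\<Sum>i=a..<b. (w i - w (Suc i)) * norm (\<Sum>j=a..i. d j))"
    unfolding sum_by_parts_atLeastAtMost[OF ab]
    by (rule order.trans[OF norm_triangle_ineq add_mono])
       (auto intro!: order.trans[OF norm_sum] sum_mono simp: nonneg decr)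
  also have "\<dots> \<le> w b * K + (\<Sum>i=a..<b. (w i - w (Suc i)) * K)"
    using ab by (intro add_mono mult_left_mono sum_mono partial) (auto simp: nonneg decr)
  also have "(\<Sum>i=a..<b. (w i - w (Suc i)) * K) = (w a - w b) * K"
    using sum_Suc_diff'[OF ab, of "\<lambda>i. - w i"] by (simp add: sum_distrib_right[symmetric])
  finally show ?thesis by (simp add: algebra_simps)
qed

lemma norm_sum_blocks_le:
  fixes w :: "nat \<Rightarrow> real" and d :: "nat \<Rightarrow> 'a::real_normed_vector"
  assumes M: "0 < M"
    and blocks: "\<And>s i. s * M \<le> i \<Longrightarrow> i < s * M + M \<Longrightarrow> norm (\<Sum>j=s*M..i. d j) \<le> K"
    and w: "antimono w" "\<And>j. 0 \<le> w j"
    and e: "e \<le> Suc S * M"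
  shows "norm (\<Sum>j\<in>{M..<e}. w j *\<^sub>R d j) \<le> K * (\<Sum>s=1..S. w (s * M))"
proof -
  have K: "0 \<le> K"
    using blocks[of 0 0] M by (simp add: order.trans[OF norm_ge_zero])
  have block: "norm (\<Sum>j\<in>{s*M..<e}. w j *\<^sub>R d j) \<le> K * w (s * M)"
    if "s * M < e" "e \<le> s * M + M" for s e
  proof -
    have "{s*M..<e} = {s*M..e - 1}" using that by auto
    then show ?thesis
      using that by (auto intro!: norm_sum_by_parts_le blocks antimonoD[OF w(1)] w(2))
  qed
  from e show ?thesis
  proof (induction S arbitrary: e)
    case 0
    then show ?case by simp
  next
    case (Suc S)
    show ?case
    proof (cases "e \<le> Suc S * M")
      case True
      then have "norm (\<Sum>j\<in>{M..<e}. w j *\<^sub>R d j) \<le> K * (\<Sum>s=1..S. w (s * M))"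
        by (rule Suc.IH)
      also have "\<dots> \<le> K * (\<Sum>s=1..Suc S. w (s * M))"
        using K w(2) by (intro mult_left_mono) auto
      finally show ?thesis .
    next
      case False
      then have split: "{M..<e} = {M..<Suc S * M} \<union> {Suc S * M..<e}"
        by (auto simp: ivl_disj_un)
      have "norm (\<Sum>j\<in>{M..<e}. w j *\<^sub>R d j)
          \<le> norm (\<Sum>j\<in>{M..<Suc S * M}. w j *\<^sub>R d j) + norm (\<Sum>j\<in>{Suc S * M..<e}. w j *\<^sub>R d j)"
        unfolding split by (subst sum.union_disjoint) (auto intro: norm_triangle_ineq)
      also have "\<dots> \<le> K * (\<Sum>s=1..S. w (s * M)) + K * w (Suc S * M)"
        using False Suc.prems by (intro add_mono Suc.IH block) auto
      finally show ?thesis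
        by (simp add: distrib_left)
    qed
  qed
qed

lemma lower_Riemann_sum_le_sum:
  fixes q :: "nat \<Rightarrow> real"
  assumes "mono q" and "S * M \<le> n"
  shows "(\<Sum>s=1..S. real M * q (n - s * M)) \<le> (\<Sum>i\<in>{n - S * M..<n}. q i)"
  using assms(2)
proof (induction S)
  case (Suc S)
  have "real M * q (n - Suc S * M) = (\<Sum>i\<in>{n - Suc S * M..<n - S * M}. q (n - Suc S * M))"
    using Suc.prems by simp
  also have "\<dots> \<le> (\<Sum>i\<in>{n - Suc S * M..<n - S * M}. q i)"
    by (intro sum_mono monoD[OF assms(1)]) auto
  finally have "(\<Sum>s=1..Suc S. real M * q (n - s * M))
      \<le> (\<Sum>i\<in>{n - Suc S * M..<n - S * M}. q i) + (\<Sum>i\<in>{n - S * M..<n}. q i)"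
    using Suc by simp
  also have "\<dots> = (\<Sum>i\<in>{n - Suc S * M..<n}. q i)"
    using Suc.prems by (subst sum.atLeastLessThan_concat) auto
  finally show ?case .
qed simp

lemma norm_normalized_weighted_sum_le:
  fixes q :: "nat \<Rightarrow> real" and d :: "nat \<Rightarrow> 'a::real_normed_field"
  assumes q: "mono q" "\<And>k. 0 \<le> q k" and M: "0 < M"
    and blocks: "\<And>s i. s * M \<le> i \<Longrightarrow> i < s * M + M \<Longrightarrow> norm (\<Sum>j=s*M..i. d j) \<le> K"
  shows "norm ((1 / of_real (\<Sum>i<n. q i)) * (\<Sum>j=M..n. of_real (q (n - j)) * d j)) \<le> K / M"
proof -
  define Q where "Q = (\<Sum>i<n. q i)"
  define S where "S = n div M"
  have K: "0 \<le> K"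
    using blocks[of 0 0] M by (simp add: order.trans[OF norm_ge_zero])
  have Q: "0 \<le> Q"
    unfolding Q_def by (simp add: sum_nonneg q(2))
  have "Suc n \<le> Suc S * M"
    using dividend_less_div_times[OF M, of n] unfolding S_def by simp
  then have "norm (\<Sum>j\<in>{M..<Suc n}. q (n - j) *\<^sub>R d j) \<le> K * (\<Sum>s=1..S. q (n - s * M))"
    using q by (intro norm_sum_blocks_le M blocks) (auto intro!: antimonoI monoD[OF q(1)])
  also have "\<dots> \<le> K * (Q / M)"
  proof -
    have "real M * (\<Sum>s=1..S. q (n - s * M)) \<le> (\<Sum>i\<in>{n - S * M..<n}. q i)"
      unfolding sum_distrib_left S_def by (rule lower_Riemann_sum_le_sum[OF q(1)]) simp
    also have "\<dots> \<le> Q"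
      unfolding Q_def by (rule sum_mono2) (auto intro: q(2))
    finally show ?thesis
      using M K by (intro mult_left_mono) (simp_all add: field_simps)
  qed
  finally have "norm (\<Sum>j=M..n. of_real (q (n - j)) * d j) \<le> K * (Q / M)"
    by (simp add: scaleR_conv_of_real atLeastLessThanSuc_atLeastAtMost)
  then have "norm ((1 / of_real Q) * (\<Sum>j=M..n. of_real (q (n - j)) * d j)) \<le> K * (Q / M) / Q"
    using Q by (simp add: norm_mult norm_divide divide_right_mono del: times_divide_eq_right)
  also have "\<dots> \<le> K / M"
    using K M by (cases "Q = 0") auto
  finally show ?thesis
    unfolding Q_def .
qed

section \<open>Vilenkin characters and Dirichlet kernels\<close>

lemma vil_M_Suc: "vil_M m (Suc k) = m k * vil_M m k"
  unfolding vil_M_def by (simp add: lessThan_Suc mult.commute)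

lemma vil_M_eq_mult_prod: "p \<le> i \<Longrightarrow> vil_M m i = vil_M m p * (\<Prod>j\<in>{p..<i}. m j)"
  unfolding vil_M_def by (metis atLeast0LessThan prod.atLeastLessThan_concat zero_le)

lemma norm_vil_r [simp]: "norm (vil_r m k y) = 1"
  by (simp add: vil_r_def)

lemma norm_vil_psi [simp]: "norm (vil_psi m n y) = 1"
  unfolding vil_psi_def by (simp add: prod_norm[symmetric] norm_power)

lemma norm_vil_D_le: "norm (vil_D m n y) \<le> n"
  unfolding vil_D_def using norm_sum[of "\<lambda>k. vil_psi m k y" "{..<n}"] by simp

context
  fixes m :: "nat \<Rightarrow> nat"
  assumes m_ge2: "\<And>k. 2 \<le> m k"
begin

lemma m_pos: "0 < m k"
  using m_ge2[of k] by linarith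

lemma vil_M_pos: "0 < vil_M m k"
  unfolding vil_M_def using m_pos by (simp add: prod_pos)

lemma vil_M_mono: "p \<le> i \<Longrightarrow> vil_M m p \<le> vil_M m i"
  using vil_M_eq_mult_prod[of p i m] m_pos by (simp add: prod_pos Suc_le_eq)

lemma less_vil_M: "k < vil_M m k"
proof (induction k)
  case (Suc k)
  then show ?case
    using mult_le_mono1[OF m_ge2[of k], of "vil_M m k"] unfolding vil_M_Suc by linarith
qed (simp add: vil_M_def)

lemma vil_digit_eq_0_if_le: "n \<le> k \<Longrightarrow> vil_digit m n k = 0"
  using less_vil_M[of k] by (simp add: vil_digit_def)

lemma vil_digit_mult_add_below:
  assumes "i < p"
  shows "vil_digit m (a * vil_M m p + r) i = vil_digit m r i"
proof -
  define c where "c = (\<Prod>j\<in>{Suc i..<p}. m j)"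
  have "a * vil_M m p + r = r + a * c * m i * vil_M m i"
    using vil_M_eq_mult_prod[of "Suc i" p m] assms unfolding c_def by (simp add: vil_M_Suc)
  then have "(a * vil_M m p + r) div vil_M m i = a * c * m i + r div vil_M m i"
    using vil_M_pos[of i] by (metis div_mult_self1 less_not_refl2)
  then show ?thesis
    by (simp add: vil_digit_def)
qed

lemma vil_digit_mult_add_above:
  assumes "r < vil_M m p" "p \<le> i"
  shows "vil_digit m (a * vil_M m p + r) i = vil_digit m (a * vil_M m p) i"
proof -
  define c where "c = (\<Prod>j\<in>{p..<i}. m j)"
  have "vil_M m i = vil_M m p * c"
    using vil_M_eq_mult_prod[of p i m] assms unfolding c_def by simp
  then show ?thesis
    using assms vil_M_pos[of p] by (simp add: vil_digit_def div_mult2_eq)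
qed

lemma vil_digit_mult_add:
  assumes r: "r < vil_M m p"
  shows "vil_digit m (a * vil_M m p + r) i = vil_digit m (a * vil_M m p) i + vil_digit m r i"
  using vil_digit_mult_add_below[of i p a r] vil_digit_mult_add_below[of i p a 0]
    vil_digit_mult_add_above[OF r, of i a] vil_digit_mult_add_above[OF r, of i 0]
  by (cases "i < p") (auto simp: vil_digit_def)

lemma vil_digit_mult_M:
  assumes c: "c < m i"
  shows "vil_digit m (c * vil_M m i) k = (if k = i then c else 0)"
proof -
  have "c * vil_M m i < vil_M m k" if "i < k"
  proof -
    have "c * vil_M m i < vil_M m (Suc i)"
      using c vil_M_pos[of i] by (simp add: vil_M_Suc)
    also have "\<dots> \<le> vil_M m k"
      using that by (intro vil_M_mono) simp
    finally show ?thesis .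
  qed
  then show ?thesis
    using c vil_M_pos[of i] vil_digit_mult_add_below[of k i c 0]
    by (cases k i rule: linorder_cases) (auto simp: vil_digit_def)
qed

lemma vil_psi_eq_prod_lessThan:
  assumes "\<And>k. L \<le> k \<Longrightarrow> vil_digit m n k = 0"
  shows "vil_psi m n y = (\<Prod>k<L. vil_r m k y ^ vil_digit m n k)"
  unfolding vil_psi_def
proof (rule prod.mono_neutral_left)
  show "{k. vil_digit m n k \<noteq> 0} \<subseteq> {..<L}"
  proof
    fix k
    assume "k \<in> {k. vil_digit m n k \<noteq> 0}"
    then show "k \<in> {..<L}"
      using assms[of k] by (cases "L \<le> k") auto
  qed
qed auto

lemma vil_psi_mult_add:
  assumes r: "r < vil_M m p"
  shows "vil_psi m (a * vil_M m p + r) y = vil_psi m (a * vil_M m p) y * vil_psi m r y"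
proof -
  define L where "L = a * vil_M m p + r"
  have digits_vanish: "\<And>k. L \<le> k \<Longrightarrow> vil_digit m n k = 0" if "n \<le> L" for n
    using that by (intro vil_digit_eq_0_if_le) simp
  have "vil_psi m (a * vil_M m p + r) y = (\<Prod>k<L. vil_r m k y ^ vil_digit m (a * vil_M m p + r) k)"
    by (rule vil_psi_eq_prod_lessThan, rule digits_vanish) (simp add: L_def)
  also have "\<dots> = (\<Prod>k<L. vil_r m k y ^ vil_digit m (a * vil_M m p) k * vil_r m k y ^ vil_digit m r k)"
    by (simp add: vil_digit_mult_add[OF r] power_add)
  also have "\<dots> = vil_psi m (a * vil_M m p) y * vil_psi m r y"
    unfolding prod.distrib
    by (subst (1 2) vil_psi_eq_prod_lessThan[where L = L]) (auto intro: digits_vanish simp: L_def)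
  finally show ?thesis .
qed

lemma vil_psi_mult_M: "c < m i \<Longrightarrow> vil_psi m (c * vil_M m i) y = vil_r m i y ^ c"
  by (simp add: vil_psi_eq_prod_lessThan[where L = "Suc i"] vil_digit_mult_M)

lemma vil_r_pow_m: "vil_r m k y ^ m k = 1"
proof -
  have "vil_r m k y ^ m k = cis (m k * (2 * pi * y k / m k))"
    unfolding vil_r_def by (rule Complex.DeMoivre)
  also have "\<dots> = cis (2 * pi * y k)"
    using m_pos[of k] by simp
  finally show ?thesis
    by (simp add: cis_multiple_2pi)
qed

lemma vil_r_neq_1:
  assumes "0 < y k" "y k < m k"
  shows "vil_r m k y \<noteq> 1"
proof
  assume "vil_r m k y = 1"
  then have "cos (2 * pi * y k / m k) = 1"
    unfolding vil_r_def by (metis complex_Re_numeral cis.sel(1) one_complex.sel(1))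
  then obtain n :: int where n: "2 * pi * y k / m k = of_int n * 2 * pi"
    using cos_one_2pi_int by blast
  then have "real_of_int n = y k / m k"
    using m_pos[of k] by (simp add: field_simps)
  moreover have "0 < y k / m k" "y k / m k < 1"
    using assms by simp_all
  ultimately have "0 < n" "n < 1"
    by simp_all
  then show False
    by simp
qed

lemma sum_vil_r_powers_eq_0:
  assumes "0 < y k" "y k < m k"
  shows "(\<Sum>c<m k. vil_r m k y ^ c) = 0"
  using vil_r_neq_1[of y k, OF assms] vil_r_pow_m by (simp add: sum_gp_strict)

lemma vil_D_mult_add:
  assumes "r \<le> vil_M m p"
  shows "vil_D m (a * vil_M m p + r) y
    = (\<Sum>b<a. vil_psi m (b * vil_M m p) y) * vil_D m (vil_M m p) y + vil_psi m (a * vil_M m p) y * vil_D m r y"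
  unfolding vil_D_def by (rule sum_lessThan_quasi_periodic) (simp_all add: vil_psi_mult_add assms)

lemma vil_D_M_Suc_eq_0:
  assumes "0 < y k" "y k < m k"
  shows "vil_D m (vil_M m (Suc k)) y = 0"
  using vil_D_mult_add[of 0 k "m k" y]
  by (simp add: vil_M_Suc vil_psi_mult_M sum_vil_r_powers_eq_0[of y k, OF assms] vil_D_def)

lemma vil_D_M_eq_0:
  assumes "k < p" "0 < y k" "y k < m k"
  shows "vil_D m (vil_M m p) y = 0"
  using vil_D_mult_add[of 0 "Suc k" "\<Prod>j\<in>{Suc k..<p}. m j" y] vil_D_M_Suc_eq_0[of y k, OF assms(2,3)]
    vil_M_eq_mult_prod[of "Suc k" p m] assms(1)
  by (simp add: mult.commute vil_D_def)

lemma vil_D_mult_add_if_D_M_eq_0: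
  assumes "vil_D m (vil_M m p) y = 0" "r \<le> vil_M m p"
  shows "vil_D m (a * vil_M m p + r) y = vil_psi m (a * vil_M m p) y * vil_D m r y"
  using vil_D_mult_add[OF assms(2)] assms(1) by simp

lemma norm_vil_D_mod:
  assumes "vil_D m (vil_M m p) y = 0"
  shows "norm (vil_D m r y) = norm (vil_D m (r mod vil_M m p) y)"
proof -
  let ?M = "vil_M m p"
  have "vil_D m r y = vil_D m (r div ?M * ?M + r mod ?M) y"
    by (simp only: div_mult_mod_eq)
  also have "\<dots> = vil_psi m (r div ?M * ?M) y * vil_D m (r mod ?M) y"
    using vil_M_pos[of p] by (intro vil_D_mult_add_if_D_M_eq_0 assms) simp
  finally show ?thesis
    by (simp add: norm_mult)
qed

lemma norm_vil_D_le_M_Suc: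
  assumes "0 < y k" "y k < m k"
  shows "norm (vil_D m r y) \<le> vil_M m (Suc k)"
proof -
  have "norm (vil_D m r y) = norm (vil_D m (r mod vil_M m (Suc k)) y)"
    by (rule norm_vil_D_mod[OF vil_D_M_Suc_eq_0[of y k, OF assms]])
  also have "\<dots> \<le> r mod vil_M m (Suc k)"
    by (rule norm_vil_D_le)
  also have "\<dots> \<le> vil_M m (Suc k)"
    using vil_M_pos[of "Suc k"] by (simp add: less_imp_le)
  finally show ?thesis .
qed

lemma sum_vil_D_mult_add:
  assumes "vil_D m (vil_M m p) y = 0" "r \<le> vil_M m p"
  shows "(\<Sum>j<a * vil_M m p + r. vil_D m j y)
    = (\<Sum>b<a. vil_psi m (b * vil_M m p) y) * (\<Sum>j<vil_M m p. vil_D m j y)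
      + vil_psi m (a * vil_M m p) y * (\<Sum>j<r. vil_D m j y)"
  by (rule sum_lessThan_quasi_periodic) (simp_all add: vil_D_mult_add_if_D_M_eq_0 assms)

lemma norm_sum_vil_D_le:
  assumes "0 < y k" "y k < m k"
  shows "norm (\<Sum>j<R. vil_D m j y) \<le> real R * vil_M m (Suc k)"
  using norm_sum[of "\<lambda>j. vil_D m j y" "{..<R}"] sum_mono[of "{..<R}" "\<lambda>j. norm (vil_D m j y)"
      "\<lambda>_. real (vil_M m (Suc k))"] norm_vil_D_le_M_Suc[of y k, OF assms]
  by simp

lemma sum_vil_D_block:
  assumes "vil_D m (vil_M m p) y = 0" "s * vil_M m p \<le> i" "i < s * vil_M m p + vil_M m p"
  shows "(\<Sum>j=s * vil_M m p..i. vil_D m j y) = vil_psi m (s * vil_M m p) y * (\<Sum>j\<le>i - s * vil_M m p. vil_D m j y)"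
  using assms
  by (simp add: sum.atLeastAtMost_shift_0[OF assms(2)] atLeast0AtMost sum_distrib_left
      vil_D_mult_add_if_D_M_eq_0)

lemma norm_sum_vil_D_mod:
  assumes "vil_D m (vil_M m p) y = 0" "(\<Sum>j<vil_M m p. vil_D m j y) = 0"
  shows "norm (\<Sum>j<R. vil_D m j y) = norm (\<Sum>j<R mod vil_M m p. vil_D m j y)"
proof -
  let ?M = "vil_M m p"
  have "(\<Sum>j<R. vil_D m j y) = (\<Sum>j<R div ?M * ?M + R mod ?M. vil_D m j y)"
    by (simp only: div_mult_mod_eq)
  also have "\<dots> = vil_psi m (R div ?M * ?M) y * (\<Sum>j<R mod ?M. vil_D m j y)"
    using vil_M_pos[of p] by (simp add: sum_vil_D_mult_add assms)
  finally show ?thesis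
    by (simp add: norm_mult)
qed

lemma norm_sum_vil_D_le_two_digits:
  assumes k: "0 < y k" "y k < m k" and "k < l" and l: "0 < y l" "y l < m l"
  shows "norm (\<Sum>j<R. vil_D m j y) \<le> (m l + 1) * vil_M m l * vil_M m (Suc k)"
proof -
  \<comment> \<open>F vanishes over a full period M_(l+1), so R may be reduced mod M_(l+1); writing the
    remainder as c M_l + r with c < m_l splits F into c copies of F_(M_l) plus F_r.\<close>
  let ?F = "\<lambda>R. \<Sum>j<R. vil_D m j y" and ?Ml = "vil_M m l" and ?Mk = "vil_M m (Suc k)"
  have D_l: "vil_D m ?Ml y = 0"
    by (rule vil_D_M_eq_0[of k l y, OF \<open>k < l\<close> k])
  have "?F (vil_M m (Suc l)) = 0"
    using sum_vil_D_mult_add[OF D_l, of 0 "m l"]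
    by (simp add: vil_M_Suc vil_psi_mult_M sum_vil_r_powers_eq_0[of y l, OF l])
  then have "norm (?F R) = norm (?F (R mod vil_M m (Suc l)))"
    by (rule norm_sum_vil_D_mod[OF vil_D_M_Suc_eq_0[of y l, OF l]])
  moreover obtain c r where "R mod vil_M m (Suc l) = c * ?Ml + r" "c < m l" "r < ?Ml"
  proof
    show "R mod vil_M m (Suc l) = R mod vil_M m (Suc l) div ?Ml * ?Ml + R mod vil_M m (Suc l) mod ?Ml"
      by (rule div_mult_mod_eq[symmetric])
    show "R mod vil_M m (Suc l) div ?Ml < m l" "R mod vil_M m (Suc l) mod ?Ml < ?Ml"
      using vil_M_pos[of l] vil_M_pos[of "Suc l"]
      by (simp_all add: vil_M_Suc div_less_iff_less_mult mult.commute)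
  qed
  moreover have "norm (?F (c * ?Ml + r)) \<le> (m l + 1) * ?Ml * ?Mk" if "c < m l" "r < ?Ml" for c r
  proof -
    have "norm (?F (c * ?Ml + r))
        \<le> norm (\<Sum>b<c. vil_psi m (b * ?Ml) y) * norm (?F ?Ml) + norm (?F r)"
      using that sum_vil_D_mult_add[OF D_l, of r c]
      by (simp add: norm_mult order.trans[OF norm_triangle_ineq])
    also have "\<dots> \<le> real c * (real ?Ml * real ?Mk) + real r * real ?Mk"
      using norm_sum[of "\<lambda>b. vil_psi m (b * ?Ml) y" "{..<c}"]
      by (intro add_mono mult_mono norm_sum_vil_D_le[of y k, OF k]) simp_all
    also have "\<dots> \<le> real (m l) * (real ?Ml * real ?Mk) + real ?Ml * real ?Mk"
      using that by (intro add_mono mult_right_mono) simp_all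
    finally show ?thesis
      by (simp add: algebra_simps)
  qed
  ultimately show ?thesis
    by simp
qed

section \<open>The Haar measure of I_N\<close>

lemma vil_I_eq_prod_emb:
  "vil_I m N = prod_emb UNIV (\<lambda>k. uniform_count_measure {..<m k}) {..<N} (\<Pi>\<^sub>E i\<in>{..<N}. {0})"
  unfolding vil_I_def vil_G_def prod_emb_def
  by (auto simp: space_uniform_count_measure PiE_iff extensional_def restrict_def fun_eq_iff)
    (metis lessThan_iff)

lemma sets_vil_I: "vil_I m N \<in> sets (vil_measure m)"
  unfolding vil_I_eq_prod_emb vil_measure_def
  by (intro measurable_prod_emb sets_PiM_I_finite) (auto simp: sets_uniform_count_measure m_pos)

lemma emeasure_vil_I: "emeasure (vil_measure m) (vil_I m N) = ennreal (1 / vil_M m N)"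
proof -
  have "emeasure (vil_measure m) (vil_I m N)
      = (\<Prod>i<N. emeasure (uniform_count_measure {..<m i}) {0})"
    unfolding vil_I_eq_prod_emb vil_measure_def
    by (rule emeasure_PiM_emb)
       (auto intro!: prob_space_uniform_count_measure simp: sets_uniform_count_measure
        lessThan_empty_iff m_pos m_pos[THEN gr_implies_not0])
  also have "\<dots> = (\<Prod>i<N. ennreal (1 / m i))"
    using m_pos by (simp add: emeasure_uniform_count_measure ennreal_of_nat_eq_real_of_nat
        divide_ennreal[symmetric])
  also have "\<dots> = ennreal (1 / vil_M m N)"
    unfolding vil_M_def by (simp add: prod_ennreal prod_dividef)
  finally show ?thesis .
qed

section \<open>The kernel sums at x - t\<close>

lemma vil_Ikl_digits:
  assumes "x \<in> vil_Ikl m N k l"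
  shows "x \<in> vil_G m" "x k \<noteq> 0" "l < N \<Longrightarrow> x l \<noteq> 0"
  using assms unfolding vil_Ikl_def by (auto split: if_splits)

lemma vil_sub_nonzero_digit:
  assumes "x \<in> vil_G m" "t \<in> vil_I m N" "i < N" "x i \<noteq> 0"
  shows "0 < vil_sub m x t i" "vil_sub m x t i < m i"
proof -
  have "t i = 0" "x i < m i"
    using assms(1-3) by (auto simp: vil_I_def vil_G_def)
  then have "vil_sub m x t i = x i"
    unfolding vil_sub_def by (simp flip: of_nat_mod)
  then show "0 < vil_sub m x t i" "vil_sub m x t i < m i"
    using \<open>x i < m i\<close> assms(4) by simp_all
qed

lemma norm_sum_vil_D_sub_le:
  assumes x: "x \<in> vil_Ikl m N k l" and t: "t \<in> vil_I m N"
    and kl: "k < l" "l \<le> N" and R: "R \<le> vil_M m N"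
  shows "norm (\<Sum>j<R. vil_D m j (vil_sub m x t)) \<le> (m l + 1) * vil_M m l * vil_M m (Suc k)"
proof -
  let ?y = "vil_sub m x t"
  have y_k: "0 < ?y k" "?y k < m k"
    using vil_sub_nonzero_digit[OF vil_Ikl_digits(1)[OF x] t _ vil_Ikl_digits(2)[OF x]] kl by auto
  show ?thesis
  proof (cases "l < N")
    case True
    then have "0 < ?y l" "?y l < m l"
      using vil_sub_nonzero_digit[OF vil_Ikl_digits(1)[OF x] t _ vil_Ikl_digits(3)[OF x]] by auto
    with y_k kl show ?thesis
      by (intro norm_sum_vil_D_le_two_digits)
  next
    case False
    then have "l = N"
      using kl by simp
    have "norm (\<Sum>j<R. vil_D m j ?y) \<le> real R * vil_M m (Suc k)"
      by (rule norm_sum_vil_D_le[of ?y k, OF y_k])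
    also have "\<dots> \<le> real (vil_M m l) * vil_M m (Suc k)"
      using R \<open>l = N\<close> by (intro mult_right_mono) simp_all
    also have "\<dots> \<le> real ((m l + 1) * vil_M m l * vil_M m (Suc k))"
      unfolding of_nat_mult[symmetric] of_nat_le_iff by simp
    finally show ?thesis .
  qed
qed

lemma norm_average_vil_D_sub_le:
  fixes q :: "nat \<Rightarrow> real"
  assumes q: "mono q" "\<And>i. 0 \<le> q i"
    and x: "x \<in> vil_Ikl m N k l" and t: "t \<in> vil_I m N" and kl: "k < l" "l \<le> N"
  shows "norm ((1 / of_real (\<Sum>i<n. q i)) *
      (\<Sum>j=vil_M m N..n. of_real (q (n - j)) * vil_D m j (vil_sub m x t)))
    \<le> (m l + 1) * vil_M m l * vil_M m (Suc k) / vil_M m N"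
proof (rule norm_normalized_weighted_sum_le[OF q vil_M_pos])
  let ?y = "vil_sub m x t"
  have "0 < ?y k" "?y k < m k"
    using vil_sub_nonzero_digit[OF vil_Ikl_digits(1)[OF x] t _ vil_Ikl_digits(2)[OF x]] kl by auto
  then have D_N: "vil_D m (vil_M m N) ?y = 0"
    using kl by (intro vil_D_M_eq_0[of k N]) auto
  fix s i
  assume "s * vil_M m N \<le> i" "i < s * vil_M m N + vil_M m N"
  then show "norm (\<Sum>j=s * vil_M m N..i. vil_D m j ?y) \<le> (m l + 1) * vil_M m l * vil_M m (Suc k)"
    using norm_sum_vil_D_sub_le[OF x t kl, of "Suc (i - s * vil_M m N)"]
    by (simp add: sum_vil_D_block[OF D_N] norm_mult lessThan_Suc_atMost)
qed

lemma set_integral_average_vil_D_sub_le: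
  fixes q :: "nat \<Rightarrow> real"
  assumes q: "mono q" "\<And>i. 0 \<le> q i"
    and kl: "k < l" "l \<le> N" and x: "x \<in> vil_Ikl m N k l"
  shows "(LINT t:vil_I m N|vil_measure m.
      norm ((1 / of_real (\<Sum>i<n. q i)) *
        (\<Sum>j=vil_M m N..n. of_real (q (n - j)) * vil_D m j (vil_sub m x t))))
    \<le> (m l + 1) * vil_M m l * vil_M m (Suc k) / real (vil_M m N) ^ 2"
proof -
  have "(LINT t:vil_I m N|vil_measure m.
      norm ((1 / of_real (\<Sum>i<n. q i)) *
        (\<Sum>j=vil_M m N..n. of_real (q (n - j)) * vil_D m j (vil_sub m x t))))
    \<le> measure (vil_measure m) (vil_I m N) * ((m l + 1) * vil_M m l * vil_M m (Suc k) / vil_M m N)"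
    by (intro set_integral_le_measure_mult sets_vil_I norm_average_vil_D_sub_le q x kl)
      (simp_all add: emeasure_vil_I)
  also have "\<dots> = (m l + 1) * vil_M m l * vil_M m (Suc k) / real (vil_M m N) ^ 2"
    by (simp add: measure_def emeasure_vil_I power2_eq_square)
  finally show ?thesis .
qed

end

theorem mainTheorem7:
  fixes m :: "nat \<Rightarrow> nat" and q :: "nat \<Rightarrow> real"
  assumes m_ge2: "\<And>k. m k \<ge> 2"
    and m_bdd: "\<exists>B. \<forall>k. m k \<le> B"
    and q_nonneg: "\<And>k. q k \<ge> 0"
    and q_mono: "mono q"
    and q0: "q 0 > 0"
  shows "\<exists>c>0. \<forall>N n k l x.
           vil_M m N \<le> n \<longrightarrow> k < N \<longrightarrow> k + 1 \<le> l \<longrightarrow> l \<le> N \<longrightarrow> x \<in> vil_Ikl m N k l \<longrightarrow>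
           (LINT t:vil_I m N|vil_measure m.
              norm ((1 / of_real (\<Sum>i<n. q i)) *
                    (\<Sum>j=vil_M m N..n. of_real (q (n - j)) * vil_D m j (vil_sub m x t))))
           \<le> c * real (vil_M m l) * real (vil_M m k) / real (vil_M m N) ^ 2"
proof -
  obtain B where B: "\<And>k. m k \<le> B"
    using m_bdd by blast
  have "0 < (B + 1) * B"
    using m_ge2[of 0] B[of 0] by simp
  then have c_pos: "0 < real ((B + 1) * B)"
    by (simp only: of_nat_0_less_iff)
  have bound: "(LINT t:vil_I m N|vil_measure m.
      norm ((1 / of_real (\<Sum>i<n. q i)) *
        (\<Sum>j=vil_M m N..n. of_real (q (n - j)) * vil_D m j (vil_sub m x t))))
    \<le> real ((B + 1) * B) * real (vil_M m l) * real (vil_M m k) / real (vil_M m N) ^ 2"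
    if "k < l" "l \<le> N" "x \<in> vil_Ikl m N k l" for N n k l x
  proof -
    have "(m l + 1) * vil_M m l * vil_M m (Suc k) \<le> (B + 1) * B * vil_M m l * vil_M m k"
      using mult_le_mono1[OF mult_le_mono[OF add_le_mono1[OF B[of l], of 1] B[of k]],
          of "vil_M m l * vil_M m k"]
      by (simp only: vil_M_Suc ac_simps)
    then have "real ((m l + 1) * vil_M m l * vil_M m (Suc k))
        \<le> real ((B + 1) * B) * real (vil_M m l) * real (vil_M m k)"
      unfolding of_nat_mult[symmetric] of_nat_le_iff .
    then show ?thesis
      by (intro order.trans[OF set_integral_average_vil_D_sub_le[OF m_ge2 q_mono q_nonneg that]]
          divide_right_mono) simp_all
  qed
  show ?thesis
    by (intro exI[of _ "real ((B + 1) * B)"] conjI c_pos allI impI bound) (simp_all add: Suc_le_eq)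
qed

end
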